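(* Let $A=(a,\ ha+d,\ ha+3d,\ ha+5d,\ \dots,\ ha+(2k+1)d)$ where $\gcd(a,d)=1$, $a,h,d,k\in\mathbb{P}$, $a>2$, $3\le 2k+1\le a-1$. Write $a-1=(2k+1)s+t$ with $1\le t\le 2k+1$. If $t$ is even, then $$g(A)=ha\Big(\Big\lfloor\frac{a-2}{2k+1}\Big\rfloor+2\Big)+(a-1)d-a.$$ If $t$ is odd, then $$g(A)=\max\Big\{ha\Big(\Big\lfloor\frac{a-2}{2k+1}\Big\rfloor+1\Big)+(a-1)d-a,\ ha\Big(\Big\lfloor\frac{a-3}{2k+1}\Big\rfloor+2\Big)+(a-2)d-a\Big\}.$$ Furthermore, $$n(A)=hs\Big(ks+t+\frac12 s-\frac12\Big)+(a-1)\Big(\frac d2+h-\frac12\Big)+h\Big\lfloor\frac t2\Big\rfloor.$$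
   Context: For a tuple $A$ of positive integers with $\gcd(A)=1$, $\mathcal{NR}(A)$ is the finite set of nonnegative integers that cannot be written as a nonnegative integer combination of the entries of $A$; $g(A)=\max\mathcal{NR}(A)$ and $n(A)=|\mathcal{NR}(A)|$. $\mathbb{P}=\{1,2,\dots\}$. *)

theory Defs
  imports Complex_Main
begin

definition representable :: "nat list \<Rightarrow> nat \<Rightarrow> bool" where
  "representable A x \<longleftrightarrow>
     (\<exists>c :: nat list. length c = length A \<and> x = (\<Sum>i<length A. c ! i * A ! i))"

definition NR :: "nat list \<Rightarrow> nat set" where
  "NR A = {x. \<not> representable A x}"

definition frob_g :: "nat list \<Rightarrow> nat" where
  "frob_g A = Max (NR A)"

definition frob_n :: "nat list \<Rightarrow> nat" where
  "frob_n A = card (NR A)"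

end

theory Submission
  imports Defs "HOL-Number_Theory.Cong"
begin

text \<open>
  An element c a + sum_j c_j (h a + (2j+1) d) of the semigroup generated by A equals
  c a + m h a + L d, where L is a sum of m odd numbers at most 2k+1. As gcd(a, d) = 1, the
  numbers L d with L < a represent every residue class modulo a once, and the least
  representable element of the class of L d is w(L) = mu(L) h a + L d, with mu(L) the least
  possible number m of odd parts. Hence n(A) = sum_{L<a} floor(w(L)/a) and
  g(A) = max_{L<a} w(L) - a (Selmer's formulas for the Apery set w(0), ..., w(a-1)).
  On a block L = (2k+1) b + r with 1 <= r <= 2k+1 one has mu(L) = b+1 for odd r and b+2 for
  even r. Summing, together with sum_{L<a} floor(L d/a) = (a-1)(d-1)/2, gives n(A); the
  maximum of w is attained at L = a-1, or for odd t possibly at L = a-2.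
\<close>

text \<open>Numerical form of: L is a sum of m odd numbers, each at most 2k+1.\<close>

definition odd_parts :: "nat \<Rightarrow> nat \<Rightarrow> nat \<Rightarrow> bool" where
  "odd_parts k m L \<longleftrightarrow> m \<le> L \<and> L \<le> (2*k+1)*m \<and> even (L + m)"

lemma odd_parts_sum: "odd_parts k (\<Sum>j<k+1. g j) (\<Sum>j<k+1. g j * (2*j+1))"
proof -
  have "(\<Sum>j<k+1. g j) \<le> (\<Sum>j<k+1. g j * (2*j+1))"
    by (intro sum_mono) simp
  moreover have "(\<Sum>j<k+1. g j * (2*j+1)) \<le> (2*k+1) * (\<Sum>j<k+1. g j)"
    unfolding sum_distrib_left by (intro sum_mono) simp
  moreover have "(\<Sum>j<k+1. g j * (2*j+1)) + (\<Sum>j<k+1. g j) = (\<Sum>j<k+1. 2 * (g j * (j+1)))"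
    by (simp add: sum.distrib[symmetric] algebra_simps)
  then have "even ((\<Sum>j<k+1. g j * (2*j+1)) + (\<Sum>j<k+1. g j))"
    by (metis (no_types, lifting) dvd_sum dvd_triv_left)
  ultimately show ?thesis
    unfolding odd_parts_def by blast
qed

lemma odd_parts_decompose:
  "odd_parts k m L \<Longrightarrow> \<exists>g. (\<Sum>j<k+1. g j) = m \<and> (\<Sum>j<k+1. g j * (2*j+1)) = L"
proof (induction m arbitrary: L)
  case 0
  then show ?case by (intro exI[of _ "\<lambda>_. 0"]) (simp add: odd_parts_def)
next
  case (Suc m)
  define p where "p = min (L - m) (2*k+1)"
  have p: "odd p" "p \<le> 2*k+1" "p \<le> L" "odd_parts k m (L - p)"
    using Suc.prems unfolding odd_parts_def p_def by (auto simp: min_def)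
  obtain j where "p = 2*j+1"
    using p(1) by (rule oddE)
  with p(2) have j: "j < k+1" "p = 2*j+1"
    by simp_all
  obtain g where g: "(\<Sum>i<k+1. g i) = m" "(\<Sum>i<k+1. g i * (2*i+1)) = L - p"
    using Suc.IH[OF p(4)] by blast
  define g' where "g' = g(j := Suc (g j))"
  have "(\<Sum>i<k+1. g' i) = Suc m"
    using g(1) j(1) by (simp add: g'_def sum.remove[of _ j] del: sum.lessThan_Suc)
  moreover have "(\<Sum>i<k+1. g' i * (2*i+1)) = L"
    using g(2) j p(3) by (simp add: g'_def sum.remove[of _ j] del: sum.lessThan_Suc)
  ultimately show ?case by blast
qed

definition min_odd_parts :: "nat \<Rightarrow> nat \<Rightarrow> nat" where
  "min_odd_parts k L = (LEAST m. odd_parts k m L)"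

lemma odd_parts_min_odd_parts: "odd_parts k (min_odd_parts k L) L"
  unfolding min_odd_parts_def by (rule LeastI[of _ L]) (simp add: odd_parts_def)

lemma min_odd_parts_le: "odd_parts k m L \<Longrightarrow> min_odd_parts k L \<le> m"
  unfolding min_odd_parts_def by (rule Least_le)

lemma min_odd_parts_0 [simp]: "min_odd_parts k 0 = 0"
  using min_odd_parts_le[of k 0 0] by (simp add: odd_parts_def)

lemma min_odd_parts_le_Suc:
  assumes "L \<le> (2*k+1)*m"
  shows "min_odd_parts k L \<le> m + 1"
proof (cases "L \<le> m")
  case True
  then show ?thesis
    using min_odd_parts_le[of k L L] by (simp add: odd_parts_def)
next
  case False
  have "(2*k+1)*m \<le> (2*k+1)*(m+1)" by simp
  then have "odd_parts k (if even (L + m) then m else m + 1) L"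
    using assms False by (auto simp: odd_parts_def)
  then have "min_odd_parts k L \<le> (if even (L + m) then m else m + 1)"
    by (rule min_odd_parts_le)
  then show ?thesis by (simp split: if_splits)
qed

lemma min_odd_parts_block:
  assumes "1 \<le> r" "r \<le> 2*k+1"
  shows "min_odd_parts k ((2*k+1)*b + r) = (if odd r then b+1 else b+2)"
  unfolding min_odd_parts_def
proof (rule Least_equality)
  show "odd_parts k (if odd r then b+1 else b+2) ((2*k+1)*b + r)"
    using assms by (auto simp: odd_parts_def algebra_simps)
next
  fix m assume m: "odd_parts k m ((2*k+1)*b + r)"
  have "b < m"
  proof (rule ccontr)
    assume "\<not> b < m"
    then have "(2*k+1)*m \<le> (2*k+1)*b"
      by (intro mult_le_mono2) simp
    then show False using m assms by (simp add: odd_parts_def)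
  qed
  moreover have "m \<noteq> b+1" if "even r"
    using m that by (auto simp: odd_parts_def)
  ultimately show "(if odd r then b+1 else b+2) \<le> m" by auto
qed

lemma min_odd_parts_last_block_odd:
  assumes "L \<le> (2*k+1)*s + t" "t \<le> 2*k+1" "odd t"
  obtains "min_odd_parts k L \<le> s + 1"
    | "min_odd_parts k L = s + 2" "L < (2*k+1)*s + t" "2 \<le> t"
proof (cases "L \<le> (2*k+1)*s")
  case True
  then show ?thesis
    using min_odd_parts_le_Suc that(1) by blast
next
  case False
  define r where "r = L - (2*k+1)*s"
  have L: "L = (2*k+1)*s + r" "1 \<le> r" "r \<le> t"
    using False assms(1) by (simp_all add: r_def)
  then have mu: "min_odd_parts k L = (if odd r then s+1 else s+2)"
    using min_odd_parts_block[of r k s] assms(2) by simp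
  show ?thesis
  proof (cases "odd r")
    case True
    then show ?thesis
      using mu that(1) by simp
  next
    case False
    then have "r \<noteq> t" "2 \<le> r"
      using assms(3) L(2) by (auto simp: le_Suc_eq dest: le_SucE)
    then show ?thesis
      using that(2) mu L False by simp
  qed
qed

lemma sum_min_odd_parts_block_prefix:
  "r \<le> 2*k+1 \<Longrightarrow> (\<Sum>L\<le>(2*k+1)*b + r. min_odd_parts k L)
     = (\<Sum>L\<le>(2*k+1)*b. min_odd_parts k L) + r*(b+1) + r div 2"
proof (induction r)
  case (Suc r)
  have "(\<Sum>L\<le>(2*k+1)*b + Suc r. min_odd_parts k L)
      = (\<Sum>L\<le>(2*k+1)*b + r. min_odd_parts k L) + min_odd_parts k ((2*k+1)*b + Suc r)"
    by simp
  moreover have "min_odd_parts k ((2*k+1)*b + Suc r) = (if odd (Suc r) then b+1 else b+2)"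
    using Suc.prems by (intro min_odd_parts_block) simp_all
  moreover have "Suc r div 2 = r div 2 + (if odd r then 1 else 0)"
    by simp
  ultimately show ?case
    using Suc by simp
qed simp

lemma two_sum_min_odd_parts:
  assumes "r \<le> 2*k+1"
  shows "2 * (\<Sum>L\<le>(2*k+1)*b + r. min_odd_parts k L)
           = (2*k+1)*b*(b+1) + 2*k*b + 2*r*(b+1) + 2*(r div 2)"
proof -
  have "2 * (\<Sum>L\<le>(2*k+1)*b. min_odd_parts k L) = (2*k+1)*b*(b+1) + 2*k*b" for b
  proof (induction b)
    case (Suc b)
    have "(2*k+1)*Suc b = (2*k+1)*b + (2*k+1)" by simp
    then show ?case
      using Suc sum_min_odd_parts_block_prefix[of "2*k+1" k b] by (simp add: algebra_simps)
  qed simp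
  then show ?thesis
    using sum_min_odd_parts_block_prefix[OF assms, of b] by (simp add: algebra_simps)
qed

lemma inj_on_mult_mod:
  fixes a d :: nat
  assumes "coprime a d"
  shows "inj_on (\<lambda>L. L * d mod a) {..<a}"
proof (rule inj_onI)
  fix L L' :: nat
  assume "L \<in> {..<a}" "L' \<in> {..<a}" and "L * d mod a = L' * d mod a"
  then have "[L * d = L' * d] (mod a)" "L < a" "L' < a" by (simp_all add: cong_def)
  then show "L = L'"
    using cong_mult_rcancel_nat[of d a L L'] assms by (simp add: coprime_commute cong_def)
qed

lemma bij_betw_mult_mod:
  fixes a d :: nat
  assumes "coprime a d"
  shows "bij_betw (\<lambda>L. L * d mod a) {..<a} {..<a}"
proof -
  have "(\<lambda>L. L * d mod a) ` {..<a} \<subseteq> {..<a}"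
    by (auto intro!: mod_less_divisor)
  then show ?thesis
    using inj_on_mult_mod[OF assms] by (simp add: bij_betw_def endo_inj_surj)
qed

lemma double_sum_lessThan: "2 * (\<Sum>L<n. L) = n * (n - 1)" for n :: nat
  by (induction n) (auto simp: algebra_simps)

lemma two_sum_mult_div_coprime:
  fixes a d :: nat
  assumes "coprime a d"
  shows "2 * (\<Sum>L<a. L * d div a) = (a - 1) * (d - 1)"
proof (cases "a = 0")
  case False
  have "(\<Sum>L<a. L * d) = (\<Sum>L<a. a * (L * d div a) + L * d mod a)"
    by (simp only: mult_div_mod_eq)
  also have "\<dots> = a * (\<Sum>L<a. L * d div a) + (\<Sum>L<a. L * d mod a)"
    by (simp only: sum.distrib sum_distrib_left)
  also have "(\<Sum>L<a. L * d mod a) = (\<Sum>L<a. L)"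
    using sum.reindex_bij_betw[OF bij_betw_mult_mod[OF assms], of id] by simp
  finally have "2 * (\<Sum>L<a. L) * d = a * (2 * (\<Sum>L<a. L * d div a)) + 2 * (\<Sum>L<a. L)"
    by (simp add: sum_distrib_right[symmetric] algebra_simps)
  then have "a * (a - 1) * d = a * (2 * (\<Sum>L<a. L * d div a)) + a * (a - 1)"
    by (simp only: double_sum_lessThan)
  then have "a * (2 * (\<Sum>L<a. L * d div a)) = a * (a - 1) * d - a * (a - 1)"
    by linarith
  also have "\<dots> = a * ((a - 1) * (d - 1))"
    by (simp only: mult.assoc[symmetric] diff_mult_distrib2[of "a * (a - 1)" d 1] mult_1_right)
  finally have "a * (2 * (\<Sum>L<a. L * d div a)) = a * ((a - 1) * (d - 1))" .
  then show ?thesis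
    using False by simp
qed simp

lemma card_residue_class_below:
  fixes a N :: nat
  assumes "0 < a"
  shows "card {x. x mod a = N mod a \<and> x < N} = N div a"
proof -
  have "{x. x mod a = N mod a \<and> x < N} = (\<lambda>i. N mod a + a * i) ` {..<N div a}"
  proof (intro set_eqI iffI)
    fix x assume x: "x \<in> {x. x mod a = N mod a \<and> x < N}"
    have "a * (x div a) + N mod a < a * (N div a) + N mod a"
      using x div_mult_mod_eq[of x a] div_mult_mod_eq[of N a] by (simp add: mult.commute)
    then have "a * (x div a) < a * (N div a)" by (rule add_less_imp_less_right)
    then have "x div a < N div a" by simp
    moreover have "x = N mod a + a * (x div a)"
      using x div_mult_mod_eq[of x a] by (simp add: mult.commute)
    ultimately show "x \<in> (\<lambda>i. N mod a + a * i) ` {..<N div a}" by blast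
  next
    fix x assume "x \<in> (\<lambda>i. N mod a + a * i) ` {..<N div a}"
    then obtain i where i: "i < N div a" "x = N mod a + a * i" by blast
    have "a * i + a \<le> a * (N div a)"
      using mult_le_mono2[of "i + 1" "N div a" a] i(1) by simp
    then have "x < N"
      using i(2) mult_div_mod_eq[of a N] mod_less_divisor[OF assms, of N] by linarith
    then show "x \<in> {x. x mod a = N mod a \<and> x < N}" using i(2) by simp
  qed
  moreover have "inj_on (\<lambda>i. N mod a + a * i) {..<N div a}"
    using assms by (auto simp: inj_on_def)
  ultimately show ?thesis
    by (simp add: card_image)
qed

text \<open>
  The values w L with L < a are the least elements of S in the residue classes modulo a,
  i.e. they form the Apery set of S with respect to a.
\<close>

locale apery_set =
  fixes a :: nat and S :: "nat set" and w :: "nat \<Rightarrow> nat"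
  assumes pos: "0 < a"
    and inj_residues: "inj_on (\<lambda>L. w L mod a) {..<a}"
    and mem_iff: "x \<in> S \<longleftrightarrow> (\<exists>L<a. w L mod a = x mod a \<and> w L \<le> x)"
begin

lemma residue_attained: "\<exists>L<a. w L mod a = x mod a"
proof -
  have "(\<lambda>L. w L mod a) ` {..<a} = {..<a}"
    using inj_residues pos by (intro endo_inj_surj) auto
  moreover have "x mod a \<in> {..<a}"
    using pos by simp
  ultimately have "x mod a \<in> (\<lambda>L. w L mod a) ` {..<a}"
    by simp
  then obtain L where "L < a" "x mod a = w L mod a"
    by auto
  then show ?thesis
    by auto
qed

lemma Compl_eq: "- S = (\<Union>L<a. {x. x mod a = w L mod a \<and> x < w L})"
proof (intro set_eqI iffI)
  fix x assume "x \<in> - S"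
  obtain L where L: "L < a" "w L mod a = x mod a"
    using residue_attained by blast
  then have "\<not> w L \<le> x"
    using \<open>x \<in> - S\<close> mem_iff[of x] by blast
  then have "x \<in> {x. x mod a = w L mod a \<and> x < w L}"
    using L(2) by simp
  then show "x \<in> (\<Union>L<a. {x. x mod a = w L mod a \<and> x < w L})"
    using L(1) by blast
next
  fix x assume "x \<in> (\<Union>L<a. {x. x mod a = w L mod a \<and> x < w L})"
  then obtain L where L: "L < a" "x mod a = w L mod a" "x < w L" by blast
  have "\<not> w L' \<le> x" if "L' < a" "w L' mod a = x mod a" for L'
    using inj_onD[OF inj_residues, of L' L] that L by simp
  then show "x \<in> - S"
    using mem_iff[of x] by blast
qed

lemma finite_Compl: "finite (- S)"
  unfolding Compl_eq by auto

lemma card_Compl: "card (- S) = (\<Sum>L<a. w L div a)"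
proof -
  have "{x. x mod a = w L mod a \<and> x < w L} \<inter> {x. x mod a = w L' mod a \<and> x < w L'} = {}"
    if "L < a" "L' < a" "L \<noteq> L'" for L L'
  proof -
    have "w L mod a \<noteq> w L' mod a"
      using inj_onD[OF inj_residues, of L L'] that by auto
    then show ?thesis by auto
  qed
  then have "card (- S) = (\<Sum>L<a. card {x. x mod a = w L mod a \<and> x < w L})"
    unfolding Compl_eq by (intro card_UN_disjoint) auto
  then show ?thesis
    by (simp add: card_residue_class_below[OF pos])
qed

lemma Max_Compl:
  assumes "\<forall>L<a. w L \<le> W" "L0 < a" "w L0 = W" "a \<le> W"
  shows "Max (- S) + a = W"
proof -
  have "Max (- S) = W - a"
  proof (rule Max_eqI[OF finite_Compl])
    fix y assume "y \<in> - S"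
    then obtain L where L: "L < a" "y mod a = w L mod a" "y < w L"
      unfolding Compl_eq by blast
    then have "a dvd w L - y"
      using mod_eq_dvd_iff_nat[of y "w L" a] by simp
    then have "a \<le> w L - y"
      using L(3) by (simp add: dvd_imp_le)
    moreover have "w L \<le> W"
      using assms(1) L(1) by blast
    ultimately show "y \<le> W - a"
      using L(3) by linarith
  next
    have "(W - a) mod a = w L0 mod a \<and> W - a < w L0"
      using assms(3,4) pos le_mod_geq[of a W] by simp
    then show "W - a \<in> - S"
      unfolding Compl_eq using assms(2) by blast
  qed
  then show ?thesis
    using assms(4) by simp
qed

end

lemma representable_iff_coeffs:
  "representable A x \<longleftrightarrow> (\<exists>c. x = (\<Sum>i<length A. c i * A ! i))"
proof
  assume "representable A x"
  then obtain cs where "x = (\<Sum>i<length A. cs ! i * A ! i)"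
    unfolding representable_def by blast
  then show "\<exists>c. x = (\<Sum>i<length A. c i * A ! i)" by blast
next
  assume "\<exists>c. x = (\<Sum>i<length A. c i * A ! i)"
  then obtain c where x: "x = (\<Sum>i<length A. c i * A ! i)" by blast
  have "x = (\<Sum>i<length A. map c [0..<length A] ! i * A ! i)"
    unfolding x by (intro sum.cong) auto
  then show "representable A x"
    unfolding representable_def by (intro exI[of _ "map c [0..<length A]"]) simp
qed

definition odd_tuple :: "nat \<Rightarrow> nat \<Rightarrow> nat \<Rightarrow> nat \<Rightarrow> nat list" where
  "odd_tuple a h d k = a # map (\<lambda>j. h*a + (2*j+1)*d) [0..<k+1]"

lemma sum_odd_tuple:
  "(\<Sum>i<length (odd_tuple a h d k). c i * odd_tuple a h d k ! i)
     = c 0 * a + (\<Sum>j<k+1. c (Suc j)) * h * a + (\<Sum>j<k+1. c (Suc j) * (2*j+1)) * d"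
proof -
  have "(\<Sum>i<length (odd_tuple a h d k). c i * odd_tuple a h d k ! i)
      = c 0 * a + (\<Sum>j<k+1. c (Suc j) * (h*a + (2*j+1)*d))"
    unfolding odd_tuple_def length_Cons length_map length_upt sum.lessThan_Suc_shift
    by (simp del: upt_Suc)
  also have "(\<Sum>j<k+1. c (Suc j) * (h*a + (2*j+1)*d))
      = (\<Sum>j<k+1. c (Suc j) * (h*a) + c (Suc j) * (2*j+1) * d)"
    by (simp add: algebra_simps)
  also have "\<dots> = (\<Sum>j<k+1. c (Suc j)) * h * a + (\<Sum>j<k+1. c (Suc j) * (2*j+1)) * d"
    by (simp only: sum.distrib sum_distrib_right mult.assoc)
  finally show ?thesis by simp
qed

lemma representable_odd_tuple_iff:
  "representable (odd_tuple a h d k) x \<longleftrightarrow> (\<exists>c m L. odd_parts k m L \<and> x = c*a + m*h*a + L*d)"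
proof
  assume "representable (odd_tuple a h d k) x"
  then show "\<exists>c m L. odd_parts k m L \<and> x = c*a + m*h*a + L*d"
    unfolding representable_iff_coeffs sum_odd_tuple using odd_parts_sum by blast
next
  assume "\<exists>c m L. odd_parts k m L \<and> x = c*a + m*h*a + L*d"
  then obtain c m L where "odd_parts k m L" and x: "x = c*a + m*h*a + L*d" by blast
  then obtain g where "(\<Sum>j<k+1. g j) = m" "(\<Sum>j<k+1. g j * (2*j+1)) = L"
    using odd_parts_decompose by blast
  then have "x = case_nat c g 0 * a + (\<Sum>j<k+1. case_nat c g (Suc j)) * h * a
                 + (\<Sum>j<k+1. case_nat c g (Suc j) * (2*j+1)) * d"
    using x by simp
  then show "representable (odd_tuple a h d k) x"
    unfolding representable_iff_coeffs sum_odd_tuple by blast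
qed

lemma mult_add_mult_mono:
  fixes m m' L L' h a d :: nat
  assumes "m \<le> m'" "L \<le> L'"
  shows "m * h * a + L * d \<le> m' * h * a + L' * d"
  using assms by (intro add_mono mult_le_mono1)

lemma min_odd_parts_mod_le:
  assumes "odd_parts k m L'" "2*k+1 \<le> a"
  shows "min_odd_parts k (L' mod a) \<le> m"
proof (cases "L' < a")
  case True
  then show ?thesis
    using min_odd_parts_le[OF assms(1)] by simp
next
  case False
  then have "0 < L' div a"
    using assms(2) by (simp add: div_greater_zero_iff)
  then have "a \<le> a * (L' div a)"
    by simp
  then have "L' mod a + (2*k+1) \<le> L'"
    using assms(2) mult_div_mod_eq[of a L'] by linarith
  moreover have "L' \<le> (2*k+1)*m"
    using assms(1) by (simp add: odd_parts_def)
  ultimately have "L' mod a \<le> (2*k+1)*(m-1)" "1 \<le> m"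
    by (simp_all add: diff_mult_distrib2) (cases m; simp)
  then show ?thesis
    using min_odd_parts_le_Suc[of "L' mod a" k "m-1"] by simp
qed

lemma representable_odd_tuple_iff_apery:
  assumes "2*k+1 \<le> a"
  shows "representable (odd_tuple a h d k) x \<longleftrightarrow>
    (\<exists>L<a. (min_odd_parts k L * h * a + L * d) mod a = x mod a
           \<and> min_odd_parts k L * h * a + L * d \<le> x)"
proof
  assume "representable (odd_tuple a h d k) x"
  then obtain c m L' where parts: "odd_parts k m L'" and x: "x = c*a + m*h*a + L'*d"
    unfolding representable_odd_tuple_iff by blast
  define L where "L = L' mod a"
  have "min_odd_parts k L * h * a + L * d \<le> m * h * a + L' * d"
    using min_odd_parts_mod_le[OF parts assms] by (intro mult_add_mult_mono) (simp_all add: L_def)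
  then have "min_odd_parts k L * h * a + L * d \<le> x"
    unfolding x by linarith
  moreover have "x = L' * d + (c + m*h) * a"
    unfolding x by (simp add: algebra_simps)
  then have "(min_odd_parts k L * h * a + L * d) mod a = x mod a"
    unfolding L_def by (simp add: mod_mult_left_eq)
  moreover have "L < a"
    using assms by (simp add: L_def)
  ultimately show "\<exists>L<a. (min_odd_parts k L * h * a + L * d) mod a = x mod a
           \<and> min_odd_parts k L * h * a + L * d \<le> x" by blast
next
  assume "\<exists>L<a. (min_odd_parts k L * h * a + L * d) mod a = x mod a
           \<and> min_odd_parts k L * h * a + L * d \<le> x"
  then obtain L c where "x = min_odd_parts k L * h * a + L * d + a * c"
    by (metis mod_eq_nat2E)
  then have "x = c*a + min_odd_parts k L * h * a + L*d"
    by simp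
  then show "representable (odd_tuple a h d k) x"
    unfolding representable_odd_tuple_iff using odd_parts_min_odd_parts by blast
qed

lemma apery_set_odd_tuple:
  assumes "coprime a d" "2*k+1 \<le> a"
  shows "apery_set a {x. representable (odd_tuple a h d k) x}
           (\<lambda>L. min_odd_parts k L * h * a + L * d)"
proof (rule apery_set.intro)
  show "0 < a"
    using assms(2) by simp
  show "inj_on (\<lambda>L. (min_odd_parts k L * h * a + L * d) mod a) {..<a}"
    using inj_on_mult_mod[OF assms(1)] by simp
  show "x \<in> {x. representable (odd_tuple a h d k) x} \<longleftrightarrow>
    (\<exists>L<a. (min_odd_parts k L * h * a + L * d) mod a = x mod a
           \<and> min_odd_parts k L * h * a + L * d \<le> x)" for x
    using representable_odd_tuple_iff_apery[OF assms(2)] by simp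
qed

lemma NR_eq_Compl: "NR A = - {x. representable A x}"
  by (auto simp: NR_def)

lemma two_frob_n_odd_tuple:
  assumes "coprime a d" "2*k+1 \<le> a" "a - 1 = (2*k+1)*s + t" "t \<le> 2*k+1"
  shows "2 * frob_n (odd_tuple a h d k)
           = h * ((2*k+1)*s*(s+1) + 2*k*s + 2*t*(s+1) + 2*(t div 2)) + (a-1)*(d-1)"
proof -
  interpret apery_set a "{x. representable (odd_tuple a h d k) x}"
      "\<lambda>L. min_odd_parts k L * h * a + L * d"
    using assms(1,2) by (rule apery_set_odd_tuple)
  have "frob_n (odd_tuple a h d k) = (\<Sum>L<a. (min_odd_parts k L * h * a + L * d) div a)"
    unfolding frob_n_def NR_eq_Compl by (rule card_Compl)
  also have "\<dots> = h * (\<Sum>L<a. min_odd_parts k L) + (\<Sum>L<a. L * d div a)"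
    using pos by (simp add: sum.distrib sum_distrib_left mult.commute)
  finally have "2 * frob_n (odd_tuple a h d k)
      = h * (2 * (\<Sum>L<a. min_odd_parts k L)) + 2 * (\<Sum>L<a. L * d div a)"
    by (simp only: add_mult_distrib2 mult.left_commute)
  moreover have "{..<a} = {..(2*k+1)*s + t}"
    using pos assms(3) by (auto simp: lessThan_Suc_atMost[symmetric])
  ultimately show ?thesis
    using two_sum_min_odd_parts[OF assms(4)] two_sum_mult_div_coprime[OF assms(1)] by simp
qed

lemma frob_g_odd_tuple:
  assumes "coprime a d" "2*k+1 \<le> a"
    and "\<forall>L<a. min_odd_parts k L * h * a + L * d \<le> W"
    and "L0 < a" "min_odd_parts k L0 * h * a + L0 * d = W" "a \<le> W"
  shows "frob_g (odd_tuple a h d k) + a = W"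
proof -
  interpret apery_set a "{x. representable (odd_tuple a h d k) x}"
      "\<lambda>L. min_odd_parts k L * h * a + L * d"
    using assms(1,2) by (rule apery_set_odd_tuple)
  show ?thesis
    unfolding frob_g_def NR_eq_Compl using assms(3-) by (rule Max_Compl)
qed

lemma frob_g_odd_tuple_even:
  assumes "coprime a d" "2*k+1 \<le> a" "0 < h"
    and "a - 1 = (2*k+1)*s + t" "1 \<le> t" "t \<le> 2*k+1" "even t"
  shows "frob_g (odd_tuple a h d k) + a = (s+2)*h*a + (a-1)*d"
proof (rule frob_g_odd_tuple[OF assms(1,2)])
  show "\<forall>L<a. min_odd_parts k L * h * a + L * d \<le> (s+2)*h*a + (a-1)*d"
  proof (intro allI impI)
    fix L assume "L < a"
    then have "L \<le> (2*k+1)*(s+1)"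
      using assms(4,6) by simp
    then have "min_odd_parts k L \<le> s + 2"
      using min_odd_parts_le_Suc by fastforce
    then show "min_odd_parts k L * h * a + L * d \<le> (s+2)*h*a + (a-1)*d"
      using \<open>L < a\<close> by (intro mult_add_mult_mono) simp_all
  qed
  show "min_odd_parts k (a-1) * h * a + (a-1) * d = (s+2)*h*a + (a-1)*d"
    using min_odd_parts_block[of t k s] assms(4-7) by simp
  have "1 * a \<le> (s+2)*h*a"
    using assms(3) by (intro mult_le_mono1) simp
  then show "a \<le> (s+2)*h*a + (a-1)*d"
    by linarith
  show "a - 1 < a"
    using assms(2) by simp
qed

lemma odd_tuple_apery_le_max:
  assumes "a - 1 = (2*k+1)*s + t" "t \<le> 2*k+1" "odd t" "L < a"
  shows "min_odd_parts k L * h * a + L * d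
           \<le> max ((s+1)*h*a + (a-1)*d) (((a-3) div (2*k+1) + 2)*h*a + (a-2)*d)"
proof (rule min_odd_parts_last_block_odd[OF _ assms(2,3)])
  show "L \<le> (2*k+1)*s + t"
    using assms(1,4) by simp
next
  assume "min_odd_parts k L \<le> s + 1"
  then have "min_odd_parts k L * h * a + L * d \<le> (s+1)*h*a + (a-1)*d"
    using assms(4) by (intro mult_add_mult_mono) simp_all
  then show ?thesis by simp
next
  assume "min_odd_parts k L = s + 2" "L < (2*k+1)*s + t" "2 \<le> t"
  moreover from \<open>2 \<le> t\<close> have "(a-3) div (2*k+1) = s"
    using assms(1,2) by (intro div_nat_eqI) simp_all
  ultimately have "min_odd_parts k L * h * a + L * d \<le> ((a-3) div (2*k+1) + 2)*h*a + (a-2)*d"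
    using assms(1) by (intro mult_add_mult_mono) simp_all
  then show ?thesis by simp
qed

lemma frob_g_odd_tuple_odd:
  assumes "coprime a d" "2*k+1 \<le> a" "2 < a" "0 < h"
    and "a - 1 = (2*k+1)*s + t" "1 \<le> t" "t \<le> 2*k+1" "odd t"
  shows "frob_g (odd_tuple a h d k) + a
           = max ((s+1)*h*a + (a-1)*d) (((a-3) div (2*k+1) + 2)*h*a + (a-2)*d)"
proof (rule frob_g_odd_tuple[OF assms(1,2)])
  define W1 where "W1 = (s+1)*h*a + (a-1)*d"
  define W2 where "W2 = ((a-3) div (2*k+1) + 2)*h*a + (a-2)*d"
  let ?w = "\<lambda>L. min_odd_parts k L * h * a + L * d"
  show "\<forall>L<a. ?w L \<le> max W1 W2"
    unfolding W1_def W2_def using odd_tuple_apery_le_max[OF assms(5,7,8)] by blast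
  have w1: "?w (a-1) = W1"
    using min_odd_parts_block[of t k s] assms(5-8) by (simp add: W1_def)
  show "?w (if W2 \<le> W1 then a - 1 else a - 2) = max W1 W2"
  proof (cases "t = 1")
    case True
    then have "(a-3) div (2*k+1) < s"
      using assms(3,5) div_less_iff_less_mult[of "2*k+1" "a-3" s] by (simp add: mult.commute)
    then have "W2 \<le> W1"
      unfolding W1_def W2_def by (intro mult_add_mult_mono) simp_all
    then show ?thesis
      using w1 by simp
  next
    case False
    then have "a - 2 = (2*k+1)*s + (t-1)" "(a-3) div (2*k+1) = s"
      using assms(5-7) by (simp_all add: div_nat_eqI)
    then have "?w (a-2) = W2"
      using min_odd_parts_block[of "t-1" k s] assms(6-8) False by (simp add: W2_def)
    then show ?thesis
      using w1 by (simp add: max_def)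
  qed
  show "(if W2 \<le> W1 then a - 1 else a - 2) < a"
    using assms(3) by simp
  have "1 * a \<le> (s+1)*h*a"
    using assms(4) by (intro mult_le_mono1) simp
  then show "a \<le> max W1 W2"
    unfolding W1_def by linarith
qed

theorem mainTheorem8:
  fixes a h d k s t :: nat
  assumes "gcd a d = 1"
    and "h \<ge> 1" and "d \<ge> 1" and "k \<ge> 1"
    and "a > 2"
    and "3 \<le> 2*k+1" and "2*k+1 \<le> a - 1"
    and "a - 1 = (2*k+1)*s + t" and "1 \<le> t" and "t \<le> 2*k+1"
  defines "A \<equiv> a # map (\<lambda>j. h*a + (2*j+1)*d) [0..<k+1]"
  shows "(even t \<longrightarrow>
            int (frob_g A) = int (h*a*((a-2) div (2*k+1) + 2)) + int ((a-1)*d) - int a)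
       \<and> (odd t \<longrightarrow>
            int (frob_g A) = max (int (h*a*((a-2) div (2*k+1) + 1)) + int ((a-1)*d) - int a)
                                 (int (h*a*((a-3) div (2*k+1) + 2)) + int ((a-2)*d) - int a))
       \<and> real (frob_n A) = real h * real s * (real k * real s + real t + real s / 2 - 1/2)
            + real (a-1) * (real d / 2 + real h - 1/2) + real h * real (t div 2)"
proof -
  have coprime: "coprime a d" and a: "2*k+1 \<le> a" "2 < a" and h: "0 < h"
    using assms(1,2,5,7) by (simp_all add: coprime_iff_gcd_eq_1)
  have A: "A = odd_tuple a h d k"
    unfolding A_def odd_tuple_def ..
  have s: "(a-2) div (2*k+1) = s"
    using assms(8-10) by (intro div_nat_eqI) simp_all
  have int_frob_g: "int (frob_g A) = int W - int a" if "frob_g (odd_tuple a h d k) + a = W" for W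
    unfolding A by (simp flip: that)
  have "even t \<Longrightarrow> int (frob_g A) = int ((s+2)*h*a + (a-1)*d) - int a"
    by (rule int_frob_g, rule frob_g_odd_tuple_even[OF coprime a(1) h assms(8-10)])
  moreover have "odd t \<Longrightarrow> int (frob_g A)
      = int (max ((s+1)*h*a + (a-1)*d) (((a-3) div (2*k+1) + 2)*h*a + (a-2)*d)) - int a"
    by (rule int_frob_g, rule frob_g_odd_tuple_odd[OF coprime a h assms(8-10)])
  moreover have "2 * real (frob_n A)
      = real h * ((2*k+1)*s*(s+1) + 2*k*s + 2*t*(s+1) + 2*(t div 2)) + real (a-1) * (real d - 1)"
    using arg_cong[OF two_frob_n_odd_tuple[OF coprime a(1) assms(8,10)], of real] assms(3)
    unfolding A by (simp add: of_nat_diff)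
  moreover have "real (a - 1) = (2*k+1)*s + t"
    using assms(8) by simp
  ultimately show ?thesis
    unfolding s by (auto simp: field_simps of_nat_max max_diff_distrib_left mult_ac)
qed

end
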